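(* For real $\zeta$, let $f(s)=1/(s+\zeta)$ and $S(s)=\operatorname{diag}(f(s),f(s))$ (a $2\times 2$ symmetric function of McMillan degree $2$ with real coefficients). Then $S$ is a Schur function if and only if $\zeta\ge1$. For every $\zeta\ge1$, $S$ has a symmetric $4\times4$ inner extension of McMillan degree $2$ (with complex coefficients). Moreover, $S$ has a symmetric $4\times4$ inner extension of McMillan degree $2$ with real coefficients if and only if $\zeta=1$.
   Context: $\Pi^+=\{s\in\mathbb C:\operatorname{Re}s>0\}$. A rational $p\times p$ matrix function analytic in $\Pi^+$ is a Schur function if $S(s)S(s)^*\le I_p$ on $\Pi^+$, and inner if moreover $S(i\omega)S(i\omega)^*=I_p$ for all real $\omega$. A $4\times4$ function is an extension of a $2\times2$ function $S$ if its lower-right $2\times2$ block is $S$; it is symmetric if it equals its transpose; it has real coefficients if $\mathcal S(s)=\overline{\mathcal S(\bar s)}$. The McMillan degree is the minimal size of $A$ in a realization $C(sI-A)^{-1}B+D$. *)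

theory Defs
  imports "HOL-Analysis.Analysis"
begin

text \<open>Matrices are represented as functions nat => nat => complex; only the
  entries with indices below the stated dimension are meaningful.\<close>

type_synonym cmat = "nat \<Rightarrow> nat \<Rightarrow> complex"

definition RHP :: "complex set" where
  "RHP = {s. Re s > 0}"

definition mmult :: "nat \<Rightarrow> cmat \<Rightarrow> cmat \<Rightarrow> cmat" where
  "mmult k M N = (\<lambda>i j. \<Sum>l<k. M i l * N l j)"

definition madj :: "cmat \<Rightarrow> cmat" where
  "madj M = (\<lambda>i j. cnj (M j i))"

definition idm :: cmat where
  "idm = (\<lambda>i j. if i = j then 1 else 0)"

definition le_identity :: "nat \<Rightarrow> cmat \<Rightarrow> bool" where
  "le_identity p M \<longleftrightarrow> (\<forall>v :: nat \<Rightarrow> complex.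
      let q = (\<Sum>i<p. \<Sum>j<p. cnj (v i) * (idm i j - M i j) * v j) in q \<in> \<real> \<and> 0 \<le> Re q)"

definition resolvent_ok :: "nat \<Rightarrow> cmat \<Rightarrow> complex \<Rightarrow> bool" where
  "resolvent_ok n A s \<longleftrightarrow> (\<forall>x :: nat \<Rightarrow> complex.
      (\<forall>i<n. (\<Sum>j<n. (s * idm i j - A i j) * x j) = 0) \<longrightarrow> (\<forall>j<n. x j = 0))"

text \<open>(A,B,C,D) with A n x n, B n x p, C p x n, D p x p is a realization of the
  p x p function F: F(s) = C (sI - A)^{-1} B + D as rational functions, i.e. for all
  but finitely many s.  Here X = (sI - A)^{-1} B is characterised as the solution of
  (sI - A) X = B.\<close>
definition realizes :: "nat \<Rightarrow> nat \<Rightarrow> cmat \<Rightarrow> cmat \<Rightarrow> cmat \<Rightarrow> cmat \<Rightarrow> (complex \<Rightarrow> cmat) \<Rightarrow> bool" where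
  "realizes p n A B C D F \<longleftrightarrow>
     finite {s. resolvent_ok n A s \<and>
        \<not> (\<forall>X :: cmat. (\<forall>i<n. \<forall>j<p. (\<Sum>k<n. (s * idm i k - A i k) * X k j) = B i j)
             \<longrightarrow> (\<forall>i<p. \<forall>j<p. F s i j = (\<Sum>k<n. C i k * X k j) + D i j))}"

definition realizable :: "nat \<Rightarrow> nat \<Rightarrow> (complex \<Rightarrow> cmat) \<Rightarrow> bool" where
  "realizable p n F \<longleftrightarrow> (\<exists>A B C D. realizes p n A B C D F)"

definition rational_mfun :: "nat \<Rightarrow> (complex \<Rightarrow> cmat) \<Rightarrow> bool" where
  "rational_mfun p F \<longleftrightarrow> (\<exists>n. realizable p n F)"

definition mcmillan_degree_is :: "nat \<Rightarrow> (complex \<Rightarrow> cmat) \<Rightarrow> nat \<Rightarrow> bool" where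
  "mcmillan_degree_is p F n \<longleftrightarrow> realizable p n F \<and> (\<forall>m<n. \<not> realizable p m F)"

definition schur_fun :: "nat \<Rightarrow> (complex \<Rightarrow> cmat) \<Rightarrow> bool" where
  "schur_fun p F \<longleftrightarrow> rational_mfun p F \<and>
     (\<forall>i<p. \<forall>j<p. (\<lambda>s. F s i j) holomorphic_on RHP) \<and>
     (\<forall>s\<in>RHP. le_identity p (mmult p (F s) (madj (F s))))"

definition inner_fun :: "nat \<Rightarrow> (complex \<Rightarrow> cmat) \<Rightarrow> bool" where
  "inner_fun p F \<longleftrightarrow> schur_fun p F \<and>
     (\<forall>\<omega>::real. \<forall>i<p. \<forall>j<p.
        mmult p (F (\<i> * of_real \<omega>)) (madj (F (\<i> * of_real \<omega>))) i j = idm i j)"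

text \<open>Identities between rational functions hold for all but finitely many s.\<close>
definition symmetric_fun :: "nat \<Rightarrow> (complex \<Rightarrow> cmat) \<Rightarrow> bool" where
  "symmetric_fun p F \<longleftrightarrow> (\<forall>\<^sub>F s in cofinite. \<forall>i<p. \<forall>j<p. F s i j = F s j i)"

definition real_coeffs :: "nat \<Rightarrow> (complex \<Rightarrow> cmat) \<Rightarrow> bool" where
  "real_coeffs p F \<longleftrightarrow> (\<forall>\<^sub>F s in cofinite. \<forall>i<p. \<forall>j<p. F s i j = cnj (F (cnj s) i j))"

definition extends4 :: "(complex \<Rightarrow> cmat) \<Rightarrow> (complex \<Rightarrow> cmat) \<Rightarrow> bool" where
  "extends4 SS S \<longleftrightarrow> (\<forall>\<^sub>F s in cofinite. \<forall>i<2. \<forall>j<2. SS s (i + 2) (j + 2) = S s i j)"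

end

theory Submission
  imports Defs
begin

text \<open>
  (1) S is Schur iff \<zeta> \<ge> 1: for \<zeta> \<ge> 1 we have |f| \<le> 1 on the right half plane,
  while for \<zeta> < 1 the entry f exceeds 1 in modulus at a small positive real point.

  (2) For \<zeta> \<ge> 1 an explicit symmetric extension SS(s) = E + M/(s + \<zeta>) is inner:
  I - SS SS* = (2 Re s / |s + \<zeta>|^2) K with K positive semidefinite, and the scalar factor
  vanishes on the imaginary axis.  It has degree 2, since M has rank 2 and no extension of S
  can have degree below 2 (the residue of its lower right block has rank 2).

  (3) Conversely, any extension of degree 2 has the form D + P/(s + \<zeta>) (Cramer's rule for
  the 2-dimensional state matrix plus comparison of coefficients with f).  Losslessness on
  the imaginary axis gives polynomial relations among D and P; symmetry and real
  coefficients make D, P real symmetric; the relations then force \<zeta>^2 = 1, and \<zeta> \<ge> 1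
  holds by (1) applied to the lower right block.
\<close>

lemma sum_lessThan_2: "(\<Sum>l<(2::nat). g l) = g 0 + (g 1 :: 'a::comm_monoid_add)"
  by (simp add: eval_nat_numeral ac_simps)

lemma sum_lessThan_4: "(\<Sum>l<(4::nat). g l) = g 0 + g 1 + g 2 + (g 3 :: 'a::comm_monoid_add)"
  by (simp add: eval_nat_numeral ac_simps)

lemma all_less_2: "(\<forall>i<(2::nat). P i) \<longleftrightarrow> P 0 \<and> P 1"
  by (auto simp: eval_nat_numeral less_Suc_eq)

lemma all_less_4: "(\<forall>i<(4::nat). P i) \<longleftrightarrow> P 0 \<and> P 1 \<and> P 2 \<and> P 3"
  by (auto simp: eval_nat_numeral less_Suc_eq)

lemma poly_eq_0_if_cofinitely_zero:
  fixes p :: "complex poly" and f :: "'a \<Rightarrow> complex"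
  assumes ev: "\<forall>\<^sub>F x in cofinite. poly p (f x) = 0"
    and inj: "inj f" and inf: "infinite (UNIV :: 'a set)"
  shows "p = 0"
proof (rule ccontr)
  assume "p \<noteq> 0"
  then have "finite (f -` {s. poly p s = 0})"
    using poly_roots_finite inj by (blast intro: finite_vimageI)
  moreover have "finite {x. poly p (f x) \<noteq> 0}"
    using ev by (simp add: eventually_cofinite)
  ultimately have "finite (f -` {s. poly p s = 0} \<union> {x. poly p (f x) \<noteq> 0})" by simp
  moreover have "f -` {s. poly p s = 0} \<union> {x. poly p (f x) \<noteq> 0} = UNIV" by auto
  ultimately show False using inf by (metis finite_Un)
qed

lemma cofinite_poly_eq_0:
  fixes p :: "complex poly"
  assumes "\<forall>\<^sub>F s in cofinite. poly p s = 0"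
  shows "p = 0"
  using poly_eq_0_if_cofinitely_zero[of p id] assms infinite_UNIV_char_0 by simp

lemma eventually_add_ne_0: "\<forall>\<^sub>F s in cofinite. s + z \<noteq> (0::complex)"
proof -
  have "{s. \<not> s + z \<noteq> 0} = {- z}" by (auto simp: add_eq_0_iff)
  then show ?thesis by (simp add: eventually_cofinite)
qed

lemma inverse_not_eventually_const:
  fixes z c :: complex
  shows "\<not> (\<forall>\<^sub>F s in cofinite. 1 / (s + z) = c)"
proof
  assume "\<forall>\<^sub>F s in cofinite. 1 / (s + z) = c"
  then have "\<forall>\<^sub>F s in cofinite. poly [:c * z - 1, c:] s = 0"
    using eventually_add_ne_0[of z]
    by eventually_elim (simp add: field_simps)
  then have "[:c * z - 1, c:] = 0" by (rule cofinite_poly_eq_0)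
  then show False by auto
qed

lemma pole_form_unique:
  fixes a b c d z :: complex
  assumes "\<forall>\<^sub>F s in cofinite. a + b / (s + z) = c + d / (s + z)"
  shows "a = c \<and> b = d"
proof -
  have "\<forall>\<^sub>F s in cofinite. poly [:z * (a - c) + (b - d), a - c:] s = 0"
    using assms eventually_add_ne_0[of z]
  proof eventually_elim
    case (elim s)
    then have "a * (s + z) + b = c * (s + z) + d" by (simp add: field_simps)
    then show ?case by (simp add: algebra_simps)
  qed
  then have "[:z * (a - c) + (b - d), a - c:] = 0" by (rule cofinite_poly_eq_0)
  then show ?thesis by auto
qed

lemma second_order_equals_first_order:
  fixes p r d t q e z :: complex
  assumes "\<forall>\<^sub>F s in cofinite. (s * p - r) / (s\<^sup>2 - t * s + q) + d = e / (s + z)"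
  shows "d = 0 \<and> p = e \<and> r = e * (z + t)"
proof -
  let ?c = "[:- r * z + d * q * z - e * q, p * z - r + d * q - d * t * z + e * t,
             p + d * z - d * t - e, d:]"
  have den: "\<forall>\<^sub>F s in cofinite. poly [:q, - t, 1:] s \<noteq> 0"
    using poly_roots_finite[of "[:q, - t, 1:]"] by (simp add: eventually_cofinite)
  have "\<forall>\<^sub>F s in cofinite. poly ?c s = 0"
    using assms den eventually_add_ne_0[of z]
  proof eventually_elim
    case (elim s)
    then have "s\<^sup>2 - t * s + q \<noteq> 0" by (simp add: algebra_simps power2_eq_square)
    with elim have "(s * p - r) * (s + z) + d * (s\<^sup>2 - t * s + q) * (s + z) = e * (s\<^sup>2 - t * s + q)"
      by (simp add: field_simps)
    then show ?case by (simp add: algebra_simps power2_eq_square power3_eq_cube)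
  qed
  then have "?c = 0" by (rule cofinite_poly_eq_0)
  then have "d = 0" "p = e" "p * z - r + e * t = 0" by (auto simp: algebra_simps)
  then show ?thesis by (simp add: algebra_simps)
qed

lemma realizes_simple_pole:
  fixes B C D M :: cmat and z :: complex
  assumes CB: "\<forall>i<p. \<forall>j<p. (\<Sum>k<n. C i k * B k j) = M i j"
  shows "realizes p n (\<lambda>i j. if i = j then - z else 0) B C D (\<lambda>s i j. D i j + M i j / (s + z))"
proof -
  have solution: "D i j + M i j / (s + z) = (\<Sum>k<n. C i k * X k j) + D i j"
    if sz: "s \<noteq> - z" and i: "i < p" and j: "j < p"
      and X: "\<forall>i<n. \<forall>j<p. (\<Sum>k<n. (s * idm i k - (if i = k then - z else 0)) * X k j) = B i j"
    for s X i j
  proof -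
    have "X k j = B k j / (s + z)" if k: "k < n" for k
    proof -
      have "(\<Sum>l<n. (s * idm k l - (if k = l then - z else 0)) * X l j)
          = (\<Sum>l<n. if l = k then (s + z) * X k j else 0)"
        by (intro sum.cong) (auto simp: idm_def)
      then have "(s + z) * X k j = B k j" using X k j by simp
      moreover have "s + z \<noteq> 0" using sz by (auto simp: add_eq_0_iff)
      ultimately show ?thesis by (simp add: field_simps)
    qed
    then have "(\<Sum>k<n. C i k * X k j) = (\<Sum>k<n. C i k * B k j) / (s + z)"
      by (simp add: sum_divide_distrib)
    then show ?thesis using CB i j by simp
  qed
  show ?thesis
    unfolding realizes_def by (rule finite_subset[of _ "{- z}"]) (use solution in auto)
qed

lemma realizes_cofinitely:
  assumes "realizes p n A B C D F"
  shows "\<forall>\<^sub>F s in cofinite. resolvent_ok n A s \<longrightarrow>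
    (\<forall>X. (\<forall>i<n. \<forall>j<p. (\<Sum>k<n. (s * idm i k - A i k) * X k j) = B i j)
       \<longrightarrow> (\<forall>i<p. \<forall>j<p. F s i j = (\<Sum>k<n. C i k * X k j) + D i j))"
  using assms unfolding realizes_def eventually_cofinite by simp

lemma realizes_dim0:
  assumes "realizes p 0 A B C D F"
  shows "\<forall>\<^sub>F s in cofinite. \<forall>i<p. \<forall>j<p. F s i j = D i j"
  using realizes_cofinitely[OF assms] by (rule eventually_mono) (auto simp: resolvent_ok_def)

lemma realizes_dim1:
  assumes "realizes p 1 A B C D F"
  shows "\<forall>\<^sub>F s in cofinite. \<forall>i<p. \<forall>j<p. F s i j = D i j + C i 0 * B 0 j / (s - A 0 0)"
proof -
  have ne: "\<forall>\<^sub>F s in cofinite. s \<noteq> A 0 0" by simp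
  show ?thesis
    using realizes_cofinitely[OF assms] ne
  proof eventually_elim
    case (elim s)
    let ?X = "\<lambda>k j. B 0 j / (s - A 0 0)"
    have "resolvent_ok 1 A s" using elim(2) by (auto simp: resolvent_ok_def idm_def)
    moreover have "\<forall>i<1. \<forall>j<p. (\<Sum>k<1. (s * idm i k - A i k) * ?X k j) = B i j"
      using elim(2) by (simp add: idm_def)
    ultimately show ?case using elim(1) by (fastforce simp: mult.commute)
  qed
qed

definition adj2 :: "cmat \<Rightarrow> cmat" where
  "adj2 A = (\<lambda>i j. if i = 0 \<and> j = 0 then A 1 1 else if i = 0 \<and> j = 1 then - A 0 1
                   else if i = 1 \<and> j = 0 then - A 1 0 else A 0 0)"

text \<open>Cramer's rule in dimension 2: if d = det(sI - A) = s^2 - tr(A) s + det(A) is nonzero, then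
  sI - A is nonsingular and (sI - A)^-1 = (sI - adj A) / d.\<close>

lemma resolvent_dim2:
  fixes A B :: cmat and s :: complex
  defines "d \<equiv> s\<^sup>2 - (A 0 0 + A 1 1) * s + (A 0 0 * A 1 1 - A 0 1 * A 1 0)"
  assumes d: "d \<noteq> 0"
  shows "resolvent_ok 2 A s"
    and "\<forall>i<2. \<forall>j<p. (\<Sum>k<2. (s * idm i k - A i k) * ((s * B k j - mmult 2 (adj2 A) B k j) / d))
        = B i j"
proof -
  show "resolvent_ok 2 A s" unfolding resolvent_ok_def
  proof (intro allI impI)
    fix x :: "nat \<Rightarrow> complex" and j :: nat
    assume h: "\<forall>i<2. (\<Sum>j<2. (s * idm i j - A i j) * x j) = 0" and j: "j < 2"
    have "(s - A 0 0) * x 0 - A 0 1 * x 1 = 0" "- A 1 0 * x 0 + (s - A 1 1) * x 1 = 0"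
      using h by (simp_all add: sum_lessThan_2 all_less_2 idm_def algebra_simps)
    then have "d * x 0 = 0" "d * x 1 = 0" unfolding d_def power2_eq_square by algebra+
    then show "x j = 0" using d j by (auto simp: less_Suc_eq eval_nat_numeral)
  qed
  show "\<forall>i<2. \<forall>j<p. (\<Sum>k<2. (s * idm i k - A i k) * ((s * B k j - mmult 2 (adj2 A) B k j) / d))
      = B i j"
  proof (intro allI impI)
    fix i j :: nat assume "i < 2"
    then have "(\<Sum>k<2. (s * idm i k - A i k) * (s * B k j - mmult 2 (adj2 A) B k j)) = d * B i j"
      unfolding d_def
      by (auto simp: mmult_def adj2_def sum_lessThan_2 idm_def less_2_cases_iff
          algebra_simps power2_eq_square)
    then show "(\<Sum>k<2. (s * idm i k - A i k) * ((s * B k j - mmult 2 (adj2 A) B k j) / d)) = B i j"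
      using d by (simp add: sum_divide_distrib[symmetric])
  qed
qed

lemma realizes_dim2:
  fixes A B C D :: cmat
  assumes r: "realizes p 2 A B C D F"
  defines "t \<equiv> A 0 0 + A 1 1" and "q \<equiv> A 0 0 * A 1 1 - A 0 1 * A 1 0"
  shows "\<forall>\<^sub>F s in cofinite. s\<^sup>2 - t * s + q \<noteq> 0 \<and> (\<forall>i<p. \<forall>j<p.
    F s i j = (s * mmult 2 C B i j - mmult 2 C (mmult 2 (adj2 A) B) i j) / (s\<^sup>2 - t * s + q) + D i j)"
proof -
  have char: "\<forall>\<^sub>F s in cofinite. poly [:q, - t, 1:] s \<noteq> 0"
    using poly_roots_finite[of "[:q, - t, 1:]"] by (simp add: eventually_cofinite)
  show ?thesis
    using realizes_cofinitely[OF r] char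
  proof eventually_elim
    case (elim s)
    define d where "d = s\<^sup>2 - t * s + q"
    have d: "d \<noteq> 0" using elim(2) by (simp add: d_def algebra_simps power2_eq_square)
    define X where "X = (\<lambda>k j. (s * B k j - mmult 2 (adj2 A) B k j) / d)"
    have "resolvent_ok 2 A s" "\<forall>i<2. \<forall>j<p. (\<Sum>k<2. (s * idm i k - A i k) * X k j) = B i j"
      using resolvent_dim2[of s A, folded t_def q_def] d unfolding X_def d_def by simp_all
    then have "\<forall>i<p. \<forall>j<p. F s i j = (\<Sum>k<2. C i k * X k j) + D i j"
      using elim(1) by blast
    moreover have "(\<Sum>k<2. C i k * X k j)
        = (s * mmult 2 C B i j - mmult 2 C (mmult 2 (adj2 A) B) i j) / d" for i j
      unfolding X_def mmult_def
      by (simp add: sum_divide_distrib[symmetric] right_diff_distrib sum_subtractf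
          sum_distrib_left mult.left_commute)
    ultimately show ?case using d by (simp add: d_def)
  qed
qed

lemma sum_unit_vector_right:
  fixes g :: "nat \<Rightarrow> complex"
  assumes "k < p"
  shows "(\<Sum>j<p. g j * (if j = k then 1 else 0)) = g k"
proof -
  have "(\<Sum>j<p. g j * (if j = k then 1 else 0)) = (\<Sum>j<p. if j = k then g j else 0)"
    by (intro sum.cong) auto
  then show ?thesis using assms by simp
qed

lemma sum_unit_vector_left:
  fixes h :: "nat \<Rightarrow> complex"
  assumes "k < p"
  shows "(\<Sum>i<p. cnj (if i = k then 1 else 0) * h i) = h k"
proof -
  have "(\<Sum>i<p. cnj (if i = k then 1 else 0) * h i) = (\<Sum>i<p. if i = k then h i else 0)"
    by (intro sum.cong) auto
  then show ?thesis using assms by simp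
qed

lemma le_identity_diag_bound:
  fixes X :: cmat
  assumes le: "le_identity p (mmult p X (madj X))" and k: "k < p"
  shows "cmod (X k k) \<le> 1"
proof -
  define v :: "nat \<Rightarrow> complex" where "v = (\<lambda>i. if i = k then 1 else 0)"
  let ?M = "mmult p X (madj X)"
  have "(\<Sum>i<p. \<Sum>j<p. cnj (v i) * (idm i j - ?M i j) * v j) = idm k k - ?M k k"
    unfolding v_def by (simp only: sum_unit_vector_right[OF k] sum_unit_vector_left[OF k])
  also have "\<dots> = 1 - ?M k k" by (simp add: idm_def)
  finally have q: "(\<Sum>i<p. \<Sum>j<p. cnj (v i) * (idm i j - ?M i j) * v j) = 1 - ?M k k" .
  from le have "0 \<le> Re (1 - ?M k k)" unfolding le_identity_def Let_def q[symmetric] by blast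
  moreover have "?M k k = of_real (\<Sum>l<p. (cmod (X k l))\<^sup>2)"
    unfolding of_real_sum mmult_def madj_def by (simp only: complex_norm_square)
  moreover have "(cmod (X k k))\<^sup>2 \<le> (\<Sum>l<p. (cmod (X k l))\<^sup>2)"
    by (rule member_le_sum) (use k in auto)
  ultimately have "(cmod (X k k))\<^sup>2 \<le> 1" by simp
  then show ?thesis by (simp add: power_le_one_iff abs_le_iff)
qed

text \<open>If a Schur function has 1/(s+\<zeta>) as a diagonal entry, then \<zeta> \<ge> 1: otherwise the entry
  has modulus larger than one at a suitable positive real point.\<close>

lemma schur_diag_inverse_ge_1:
  fixes F :: "complex \<Rightarrow> cmat" and \<zeta> :: real
  assumes sch: "schur_fun p F" and k: "k < p"
    and ev: "\<forall>\<^sub>F s in cofinite. F s k k = 1 / (s + of_real \<zeta>)"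
  shows "\<zeta> \<ge> 1"
proof (rule ccontr)
  assume "\<not> \<zeta> \<ge> 1"
  define lo where "lo = max 0 (-1 - \<zeta>)"
  define hi where "hi = 1 - \<zeta>"
  have "\<forall>\<^sub>F t in cofinite. F (of_real t) k k = 1 / (of_real t + of_real \<zeta>) \<and> t \<noteq> - \<zeta>"
    using MOST_inj[OF ev, of of_real] MOST_neq(1)[of "- \<zeta>"]
    by (simp add: eventually_conj_iff inj_def)
  then have bad: "finite {t. \<not> (F (of_real t) k k = 1 / (of_real t + of_real \<zeta>) \<and> t \<noteq> - \<zeta>)}"
    by (simp add: eventually_cofinite)
  have "infinite {lo<..<hi}" using \<open>\<not> \<zeta> \<ge> 1\<close> by (simp add: lo_def hi_def)
  then obtain t where "t \<in> {lo<..<hi} -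
      {t. \<not> (F (of_real t) k k = 1 / (of_real t + of_real \<zeta>) \<and> t \<noteq> - \<zeta>)}"
    using infinite_imp_nonempty[OF Diff_infinite_finite[OF bad]] by blast
  then have t: "lo < t" "t < hi" "t \<noteq> - \<zeta>"
    and Ft: "F (of_real t) k k = 1 / (of_real t + of_real \<zeta>)" by auto
  have "of_real t \<in> RHP" using t by (simp add: RHP_def lo_def)
  then have "le_identity p (mmult p (F (of_real t)) (madj (F (of_real t))))"
    using sch unfolding schur_fun_def by blast
  then have "cmod (F (of_real t) k k) \<le> 1" using k by (rule le_identity_diag_bound)
  moreover have "cmod (F (of_real t) k k) = 1 / \<bar>t + \<zeta>\<bar>"
    unfolding Ft by (simp only: of_real_add[symmetric] norm_divide norm_of_real norm_one)
  moreover have "0 < \<bar>t + \<zeta>\<bar>" "\<bar>t + \<zeta>\<bar> < 1"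
    using t by (auto simp: lo_def hi_def)
  ultimately show False by (simp add: field_simps)
qed

lemma scalar_matrix_le_identity:
  fixes f :: complex
  assumes "cmod f \<le> 1"
  shows "le_identity p (mmult p (\<lambda>i j. if i = j then f else 0) (madj (\<lambda>i j. if i = j then f else 0)))"
  unfolding le_identity_def Let_def
proof (intro allI)
  fix v :: "nat \<Rightarrow> complex"
  let ?X = "\<lambda>i j. if i = j then f else 0"
  have M: "mmult p ?X (madj ?X) i j = (if i = j then f * cnj f else 0)" if "i < p" for i j
  proof -
    have "mmult p ?X (madj ?X) i j = (\<Sum>l<p. if l = i then (if i = j then f * cnj f else 0) else 0)"
      unfolding mmult_def madj_def by (intro sum.cong) auto
    then show ?thesis using that by simp
  qed
  have "(\<Sum>i<p. \<Sum>j<p. cnj (v i) * (idm i j - mmult p ?X (madj ?X) i j) * v j)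
      = (\<Sum>i<p. \<Sum>j<p. if j = i then (1 - f * cnj f) * (cnj (v i) * v i) else 0)"
    by (intro sum.cong refl) (auto simp: M idm_def)
  also have "\<dots> = of_real ((1 - (cmod f)\<^sup>2) * (\<Sum>i<p. (cmod (v i))\<^sup>2))"
    unfolding of_real_mult of_real_sum of_real_diff of_real_1 sum_distrib_left
    by (simp only: complex_norm_square) (simp add: mult.commute)
  finally have q: "(\<Sum>i<p. \<Sum>j<p. cnj (v i) * (idm i j - mmult p ?X (madj ?X) i j) * v j)
      = of_real ((1 - (cmod f)\<^sup>2) * (\<Sum>i<p. (cmod (v i))\<^sup>2))" .
  have "(cmod f)\<^sup>2 \<le> 1" using assms by (simp add: power_le_one)
  then have "0 \<le> (1 - (cmod f)\<^sup>2) * (\<Sum>i<p. (cmod (v i))\<^sup>2)"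
    by (simp add: sum_nonneg)
  then show "(\<Sum>i<p. \<Sum>j<p. cnj (v i) * (idm i j - mmult p ?X (madj ?X) i j) * v j) \<in> \<real> \<and>
      0 \<le> Re (\<Sum>i<p. \<Sum>j<p. cnj (v i) * (idm i j - mmult p ?X (madj ?X) i j) * v j)"
    unfolding q by simp
qed

definition diag_pole :: "complex \<Rightarrow> complex \<Rightarrow> cmat" where
  "diag_pole z = (\<lambda>s i j. if i = j then 1 / (s + z) else 0)"

lemma add_of_real_ne_0_RHP:
  fixes \<zeta> :: real
  assumes "s \<in> RHP" "\<zeta> \<ge> 0"
  shows "s + of_real \<zeta> \<noteq> 0"
  using assms by (auto simp: RHP_def complex_eq_iff)

lemma diag_pole_realizable:
  "realizes 2 2 (\<lambda>i j. if i = j then - z else 0) idm idm (\<lambda>i j. 0) (diag_pole z)"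
proof -
  have "diag_pole z = (\<lambda>s i j. 0 + idm i j / (s + z))"
    by (auto simp: diag_pole_def idm_def fun_eq_iff)
  moreover have "\<forall>i<2. \<forall>j<2. (\<Sum>k<2. idm i k * idm k j) = idm i j"
    by (simp add: all_less_2 sum_lessThan_2 idm_def)
  ultimately show ?thesis using realizes_simple_pole[where B = idm and C = idm and D = "\<lambda>i j. 0"] by simp
qed

lemma diag_pole_schur_iff:
  fixes \<zeta> :: real
  shows "schur_fun 2 (diag_pole (of_real \<zeta>)) \<longleftrightarrow> \<zeta> \<ge> 1"
proof
  assume "schur_fun 2 (diag_pole (of_real \<zeta>))"
  then show "\<zeta> \<ge> 1"
    by (rule schur_diag_inverse_ge_1[where k = 0]) (simp_all add: diag_pole_def)
next
  assume z1: "\<zeta> \<ge> 1"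
  have "rational_mfun 2 (diag_pole (of_real \<zeta>))"
    unfolding rational_mfun_def realizable_def using diag_pole_realizable by blast
  moreover have "(\<lambda>s. diag_pole (of_real \<zeta>) s i j) holomorphic_on RHP" for i j
    using add_of_real_ne_0_RHP z1 by (cases "i = j") (auto simp: diag_pole_def intro!: holomorphic_intros)
  moreover have "le_identity 2 (mmult 2 (diag_pole (of_real \<zeta>) s) (madj (diag_pole (of_real \<zeta>) s)))"
    if "s \<in> RHP" for s
  proof -
    have "1 \<le> Re (s + of_real \<zeta>)" using that z1 by (simp add: RHP_def)
    also have "\<dots> \<le> cmod (s + of_real \<zeta>)" by (rule complex_Re_le_cmod)
    finally have "cmod (1 / (s + of_real \<zeta>)) \<le> 1" by (simp add: norm_divide divide_le_eq_1)
    then show ?thesis unfolding diag_pole_def by (rule scalar_matrix_le_identity)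
  qed
  ultimately show "schur_fun 2 (diag_pole (of_real \<zeta>))" unfolding schur_fun_def by blast
qed

lemma extends4_diag_pole:
  assumes "extends4 SS (diag_pole z)"
  shows "\<forall>\<^sub>F s in cofinite. \<forall>i<2. \<forall>j<2. SS s (i + 2) (j + 2) = idm i j / (s + z)"
  using assms unfolding extends4_def diag_pole_def idm_def
  by (rule eventually_mono) auto

text \<open>An extension of S cannot have a residue of rank at most one, i.e. cannot be cofinitely of the
  form D + c b' / (s - a): the block diag(f, f) has a residue of rank two.\<close>

lemma extension_of_diag_pole_not_rank_one:
  assumes ext: "extends4 SS (diag_pole z)"
    and F: "\<forall>\<^sub>F s in cofinite. \<forall>i<4. \<forall>j<4. SS s i j = D i j + c i * b j / (s - a)"
  shows False
proof -
  have block: "\<forall>\<^sub>F s in cofinite. SS s 2 2 = 1 / (s + z) \<and> SS s 2 3 = 0 \<and> SS s 3 3 = 1 / (s + z)"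
    using extends4_diag_pole[OF ext]
    by (rule eventually_mono) (auto simp: all_less_2 idm_def eval_nat_numeral)
  have not_const: "\<not> (\<forall>\<^sub>F s in cofinite. SS s k k = e)" if "k = 2 \<or> k = 3" for k e
  proof
    assume "\<forall>\<^sub>F s in cofinite. SS s k k = e"
    with block have "\<forall>\<^sub>F s in cofinite. 1 / (s + z) = e"
      by eventually_elim (use that in auto)
    then show False using inverse_not_eventually_const by blast
  qed
  have "c 2 * b 3 = 0"
  proof (rule ccontr)
    assume cb: "c 2 * b 3 \<noteq> 0"
    have "\<forall>\<^sub>F s in cofinite. 1 / (s + - a) = - D 2 3 / (c 2 * b 3)"
      using F block MOST_neq(2)[of a]
    proof eventually_elim
      case (elim s)
      then have "0 = D 2 3 + c 2 * b 3 / (s - a)" by simp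
      with cb elim(3) show ?case by (simp add: field_simps)
    qed
    then show False using inverse_not_eventually_const by blast
  qed
  then consider "c 2 = 0" | "b 3 = 0" by auto
  then show False
  proof cases
    case 1
    have "\<forall>\<^sub>F s in cofinite. SS s 2 2 = D 2 2" using F by (rule eventually_mono) (simp add: 1)
    then show False using not_const by blast
  next
    case 2
    have "\<forall>\<^sub>F s in cofinite. SS s 3 3 = D 3 3" using F by (rule eventually_mono) (simp add: 2)
    then show False using not_const by blast
  qed
qed

text \<open>Hence an extension of S has McMillan degree at least 2: state dimension 0 gives a residue
  zero and state dimension 1 a residue of rank one.\<close>

lemma extension_of_diag_pole_not_realizable_below_2:
  assumes ext: "extends4 SS (diag_pole z)" and m: "m < 2"
  shows "\<not> realizable 4 m SS"
proof
  assume "realizable 4 m SS"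
  then obtain A B C D where r: "realizes 4 m A B C D SS" unfolding realizable_def by blast
  consider "m = 0" | "m = 1" using m by linarith
  then show False
  proof cases
    case 1
    have "\<forall>\<^sub>F s in cofinite. \<forall>i<4. \<forall>j<4. SS s i j = D i j + 0 * 0 / (s - 0)"
      using realizes_dim0[OF r[unfolded 1]] by simp
    then show False by (rule extension_of_diag_pole_not_rank_one[OF ext])
  next
    case 2
    show False
      using realizes_dim1[OF r[unfolded 2]] by (rule extension_of_diag_pole_not_rank_one[OF ext])
  qed
qed

lemma conjugation_by_inverse_2:
  fixes X Y N :: cmat and k :: complex
  assumes XY: "\<forall>i<2. \<forall>j<2. mmult 2 X Y i j = idm i j"
    and XNY: "\<forall>i<2. \<forall>j<2. mmult 2 X (mmult 2 N Y) i j = k * idm i j"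
  shows "N 0 0 = k \<and> N 0 1 = 0 \<and> N 1 0 = 0 \<and> N 1 1 = k"
proof -
  have "X 0 0 * Y 0 0 + X 0 1 * Y 1 0 = 1" "X 0 0 * Y 0 1 + X 0 1 * Y 1 1 = 0"
       "X 1 0 * Y 0 0 + X 1 1 * Y 1 0 = 0" "X 1 0 * Y 0 1 + X 1 1 * Y 1 1 = 1"
    using XY by (simp_all add: all_less_2 mmult_def sum_lessThan_2 idm_def)
  moreover have
    "X 0 0 * (N 0 0 * Y 0 0 + N 0 1 * Y 1 0) + X 0 1 * (N 1 0 * Y 0 0 + N 1 1 * Y 1 0) = k"
    "X 0 0 * (N 0 0 * Y 0 1 + N 0 1 * Y 1 1) + X 0 1 * (N 1 0 * Y 0 1 + N 1 1 * Y 1 1) = 0"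
    "X 1 0 * (N 0 0 * Y 0 0 + N 0 1 * Y 1 0) + X 1 1 * (N 1 0 * Y 0 0 + N 1 1 * Y 1 0) = 0"
    "X 1 0 * (N 0 0 * Y 0 1 + N 0 1 * Y 1 1) + X 1 1 * (N 1 0 * Y 0 1 + N 1 1 * Y 1 1) = k"
    using XNY by (simp_all add: all_less_2 mmult_def sum_lessThan_2 idm_def)
  ultimately show ?thesis by algebra
qed

text \<open>Comparing the block entries with f forces the
  block of C adj(A) B to be a multiple of the invertible block of C B, hence A = -z I.\<close>

lemma degree2_extension_pole_form:
  fixes A B C D :: cmat
  assumes ext: "extends4 SS (diag_pole z)" and r: "realizes 4 2 A B C D SS"
  shows "\<exists>P. (\<forall>\<^sub>F s in cofinite. \<forall>i<4. \<forall>j<4. SS s i j = D i j + P i j / (s + z))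
      \<and> (\<forall>i<2. \<forall>j<2. D (i + 2) (j + 2) = 0 \<and> P (i + 2) (j + 2) = idm i j)"
proof -
  define t where "t = A 0 0 + A 1 1"
  define q where "q = A 0 0 * A 1 1 - A 0 1 * A 1 0"
  define P where "P = mmult 2 C B"
  define R where "R = mmult 2 C (mmult 2 (adj2 A) B)"
  have F: "\<forall>\<^sub>F s in cofinite. s\<^sup>2 - t * s + q \<noteq> 0 \<and>
      (\<forall>i<4. \<forall>j<4. SS s i j = (s * P i j - R i j) / (s\<^sup>2 - t * s + q) + D i j)"
    using realizes_dim2[OF r] unfolding P_def R_def t_def q_def .
  have block: "D (i + 2) (j + 2) = 0 \<and> P (i + 2) (j + 2) = idm i j
      \<and> R (i + 2) (j + 2) = idm i j * (z + t)" if "i < 2" "j < 2" for i j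
  proof (rule second_order_equals_first_order)
    show "\<forall>\<^sub>F s in cofinite. (s * P (i + 2) (j + 2) - R (i + 2) (j + 2)) / (s\<^sup>2 - t * s + q)
        + D (i + 2) (j + 2) = idm i j / (s + z)"
      using F extends4_diag_pole[OF ext] by eventually_elim (use that in auto)
  qed
  have "adj2 A 0 0 = z + t \<and> adj2 A 0 1 = 0 \<and> adj2 A 1 0 = 0 \<and> adj2 A 1 1 = z + t"
  proof (rule conjugation_by_inverse_2)
    show "\<forall>i<2. \<forall>j<2. mmult 2 (\<lambda>i k. C (i + 2) k) (\<lambda>k j. B k (j + 2)) i j = idm i j"
      using block by (simp add: P_def mmult_def)
    show "\<forall>i<2. \<forall>j<2. mmult 2 (\<lambda>i k. C (i + 2) k) (mmult 2 (adj2 A) (\<lambda>k j. B k (j + 2))) i j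
        = (z + t) * idm i j"
      using block by (simp add: R_def mmult_def mult.commute)
  qed
  then have A: "A 0 0 = - z" "A 1 1 = - z" "A 0 1 = 0" "A 1 0 = 0"
    unfolding adj2_def t_def by (auto simp: algebra_simps eq_neg_iff_add_eq_0)
  have R: "R i j = - z * P i j" for i j
    unfolding R_def P_def mmult_def adj2_def by (simp add: sum_lessThan_2 A A[unfolded One_nat_def] algebra_simps)
  have "\<forall>\<^sub>F s in cofinite. \<forall>i<4. \<forall>j<4. SS s i j = D i j + P i j / (s + z)"
    using F
  proof eventually_elim
    case (elim s)
    have dt: "s\<^sup>2 - t * s + q = (s + z)\<^sup>2"
      unfolding t_def q_def A by (simp add: algebra_simps power2_eq_square)
    then have "s + z \<noteq> 0" using elim by auto
    then have "(s * P i j - R i j) / (s\<^sup>2 - t * s + q) = P i j / (s + z)" for i j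
    proof -
      have "s * P i j - R i j = (s + z) * P i j" unfolding R by (simp add: algebra_simps)
      then show ?thesis unfolding dt using \<open>s + z \<noteq> 0\<close> by (simp add: power2_eq_square)
    qed
    then show ?case using elim by simp
  qed
  then show ?thesis using block by blast
qed

lemma mmult_adj_affine:
  fixes D M :: cmat and f :: complex
  shows "mmult n (\<lambda>i j. D i j + f * M i j) (madj (\<lambda>i j. D i j + f * M i j)) i j
     = mmult n D (madj D) i j + f * mmult n M (madj D) i j + cnj f * mmult n D (madj M) i j
       + f * cnj f * mmult n M (madj M) i j"
proof -
  have "(D i l + f * M i l) * cnj (D j l + f * M j l)
     = D i l * cnj (D j l) + f * (M i l * cnj (D j l)) + cnj f * (D i l * cnj (M j l))
       + f * cnj f * (M i l * cnj (M j l))" for l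
    by (simp add: algebra_simps)
  then show ?thesis
    unfolding mmult_def madj_def by (simp only: sum.distrib sum_distrib_left[symmetric])
qed

text \<open>If SS = D + P/(s+\<zeta>) is unitary on the imaginary axis, then D D* = I, P D* = D P* and
  \<zeta> (P D* + D P*) + P P* = 0 (coefficients of a polynomial identity in omega).\<close>

lemma pole_form_unitary_on_axis:
  fixes SS :: "complex \<Rightarrow> cmat" and D P :: cmat and \<zeta> :: real
  assumes pole: "\<forall>\<^sub>F s in cofinite. \<forall>i<n. \<forall>j<n. SS s i j = D i j + P i j / (s + of_real \<zeta>)"
    and unitary: "\<forall>\<omega>::real. \<forall>i<n. \<forall>j<n.
        mmult n (SS (\<i> * of_real \<omega>)) (madj (SS (\<i> * of_real \<omega>))) i j = idm i j"
    and ij: "i < n" "j < n"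
  shows "mmult n D (madj D) i j = idm i j \<and> mmult n P (madj D) i j = mmult n D (madj P) i j
     \<and> of_real \<zeta> * (mmult n P (madj D) i j + mmult n D (madj P) i j) + mmult n P (madj P) i j = 0"
proof -
  let ?z = "complex_of_real \<zeta>"
  let ?a = "mmult n D (madj D) i j" and ?b = "mmult n P (madj D) i j"
  let ?c = "mmult n D (madj P) i j" and ?d = "mmult n P (madj P) i j" and ?e = "idm i j"
  let ?p = "[:?z\<^sup>2 * (?a - ?e) + ?z * (?b + ?c) + ?d, \<i> * (?c - ?b), ?a - ?e:]"
  have axis: "\<forall>\<^sub>F \<omega> in cofinite. \<forall>i<n. \<forall>j<n.
      SS (\<i> * of_real \<omega>) i j = D i j + (1 / (\<i> * of_real \<omega> + ?z)) * P i j"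
    using MOST_inj[OF pole, of "\<lambda>\<omega>::real. \<i> * of_real \<omega>"] by (simp add: inj_def)
  have "\<forall>\<^sub>F \<omega> in cofinite. poly ?p (of_real \<omega>) = 0"
    using axis MOST_neq(2)[of "0::real"]
  proof eventually_elim
    case (elim \<omega>)
    define w where "w = \<i> * of_real \<omega> + ?z"
    have w: "w \<noteq> 0" "cnj w \<noteq> 0" using elim(2) by (auto simp: w_def complex_eq_iff)
    have "?e = mmult n (SS (\<i> * of_real \<omega>)) (madj (SS (\<i> * of_real \<omega>))) i j"
      using unitary ij by simp
    also have "\<dots> = mmult n (\<lambda>i j. D i j + (1 / w) * P i j) (madj (\<lambda>i j. D i j + (1 / w) * P i j)) i j"
      unfolding mmult_def madj_def w_def using elim(1) ij by (intro sum.cong) auto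
    also have "\<dots> = ?a + (1 / w) * ?b + cnj (1 / w) * ?c + (1 / w) * cnj (1 / w) * ?d"
      by (rule mmult_adj_affine)
    finally have "?e = ?a + (1 / w) * ?b + (1 / cnj w) * ?c + (1 / w) * (1 / cnj w) * ?d"
      by simp
    then have "w * cnj w * ?a + cnj w * ?b + w * ?c + ?d = w * cnj w * ?e"
      using w by (simp add: field_simps)
    then show ?case
      by (simp add: w_def algebra_simps power2_eq_square)
  qed
  then have "?p = 0"
    by (rule poly_eq_0_if_cofinitely_zero) (auto simp: inj_def infinite_UNIV_char_0)
  then have "?a = ?e" "?b = ?c" "?z\<^sup>2 * (?a - ?e) + ?z * (?b + ?c) + ?d = 0" by auto
  then show ?thesis by simp
qed

lemma pole_form_symmetric:
  fixes SS :: "complex \<Rightarrow> cmat" and D P :: cmat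
  assumes pole: "\<forall>\<^sub>F s in cofinite. \<forall>i<n. \<forall>j<n. SS s i j = D i j + P i j / (s + z)"
    and sym: "symmetric_fun n SS" and ij: "i < n" "j < n"
  shows "D i j = D j i \<and> P i j = P j i"
proof (rule pole_form_unique)
  show "\<forall>\<^sub>F s in cofinite. D i j + P i j / (s + z) = D j i + P j i / (s + z)"
    using pole sym unfolding symmetric_fun_def by eventually_elim (use ij in metis)
qed

lemma pole_form_real:
  fixes SS :: "complex \<Rightarrow> cmat" and D P :: cmat and \<zeta> :: real
  assumes pole: "\<forall>\<^sub>F s in cofinite. \<forall>i<n. \<forall>j<n. SS s i j = D i j + P i j / (s + of_real \<zeta>)"
    and rc: "real_coeffs n SS" and ij: "i < n" "j < n"
  shows "cnj (D i j) = D i j \<and> cnj (P i j) = P i j"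
proof -
  have conj_pole: "\<forall>\<^sub>F s in cofinite. \<forall>i<n. \<forall>j<n.
      SS (cnj s) i j = D i j + P i j / (cnj s + of_real \<zeta>)"
    using MOST_inj[OF pole, of cnj] by (simp add: inj_def)
  have "D i j = cnj (D i j) \<and> P i j = cnj (P i j)"
  proof (rule pole_form_unique)
    show "\<forall>\<^sub>F s in cofinite. D i j + P i j / (s + of_real \<zeta>)
        = cnj (D i j) + cnj (P i j) / (s + of_real \<zeta>)"
      using pole conj_pole rc unfolding real_coeffs_def
    proof eventually_elim
      case (elim s)
      then have "SS s i j = cnj (D i j + P i j / (cnj s + of_real \<zeta>))" using ij by metis
      then show ?case using elim(1) ij by simp
    qed
  qed
  then show ?thesis by simp
qed

text \<open>In block form D = [D1 D2; D2' 0], P = [P1 P2; P2' I] with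
  real symmetric D, P: unitarity gives D2 orthogonal and D1 = 0, then P1 = I and P2 = -z D2,
  and the (2,2) entry of the third relation becomes 1 - z^2 = 0.\<close>

lemma real_symmetric_lossless_scalar_constraints:
  fixes d00 d01 d11 d02 d03 d12 d13 p00 p01 p11 p02 p03 p12 p13 z :: complex
  assumes
   e22: "d02 * d02 + d12 * d12 = 1" and e23: "d02 * d03 + d12 * d13 = 0"
   and e33: "d03 * d03 + d13 * d13 = 1"
   and f02: "d00 * d02 + d01 * d12 = 0" and f03: "d00 * d03 + d01 * d13 = 0"
   and f12: "d01 * d02 + d11 * d12 = 0" and f13: "d01 * d03 + d11 * d13 = 0"
   and g02: "p00 * d02 + p01 * d12 = d00 * p02 + d01 * p12 + d02"
   and g03: "p00 * d03 + p01 * d13 = d00 * p03 + d01 * p13 + d03"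
   and g12: "p01 * d02 + p11 * d12 = d01 * p02 + d11 * p12 + d12"
   and g13: "p01 * d03 + p11 * d13 = d01 * p03 + d11 * p13 + d13"
   and h02: "z * ((p00 * d02 + p01 * d12) + (d00 * p02 + d01 * p12 + d02))
             + (p00 * p02 + p01 * p12 + p02) = 0"
   and h12: "z * ((p01 * d02 + p11 * d12) + (d01 * p02 + d11 * p12 + d12))
             + (p01 * p02 + p11 * p12 + p12) = 0"
   and h22: "z * (2 * (p02 * d02 + p12 * d12)) + (p02 * p02 + p12 * p12 + 1) = 0"
  shows "z * z = 1"
proof -
  have D2_orthogonal: "d02 * d02 + d03 * d03 = 1" "d02 * d12 + d03 * d13 = 0"
      "d12 * d12 + d13 * d13 = 1"
    using e22 e23 e33 by algebra+
  have D1_zero: "d00 = 0" "d01 = 0" "d11 = 0"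
    using D2_orthogonal f02 f03 f12 f13 by algebra+
  have P1_identity: "p00 = 1" "p01 = 0" "p11 = 1"
    using D2_orthogonal g02 g03 g12 g13 D1_zero by algebra+
  have P2: "p02 = - z * d02" "p12 = - z * d12"
    using h02 h12 P1_identity D1_zero by algebra+
  show ?thesis using h22 P2 e22 by algebra
qed

lemma real_symmetric_lossless_pole_at_unit:
  fixes D P :: cmat and z :: complex
  assumes real_sym: "\<forall>i<4. \<forall>j<4. D i j = D j i \<and> P i j = P j i
        \<and> cnj (D i j) = D i j \<and> cnj (P i j) = P i j"
    and block: "\<forall>i<2. \<forall>j<2. D (i + 2) (j + 2) = 0 \<and> P (i + 2) (j + 2) = idm i j"
    and lossless: "\<forall>i<4. \<forall>j<4. mmult 4 D (madj D) i j = idm i j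
        \<and> mmult 4 P (madj D) i j = mmult 4 D (madj P) i j
        \<and> z * (mmult 4 P (madj D) i j + mmult 4 D (madj P) i j) + mmult 4 P (madj P) i j = 0"
  shows "z * z = 1"
proof -
  have sym: "D 1 0 = D 0 1" "D 2 0 = D 0 2" "D 2 1 = D 1 2" "D 3 0 = D 0 3" "D 3 1 = D 1 3"
      "P 1 0 = P 0 1" "P 2 0 = P 0 2" "P 2 1 = P 1 2" "P 3 0 = P 0 3" "P 3 1 = P 1 3"
    using real_sym by simp_all
  have real: "cnj (D i j) = D i j" "cnj (P i j) = P i j" if "i < 4" "j < 4" for i j
    using real_sym that by auto
  have blk: "D 2 2 = 0" "D 2 3 = 0" "D 3 2 = 0" "D 3 3 = 0"
      "P 2 2 = 1" "P 2 3 = 0" "P 3 2 = 0" "P 3 3 = 1"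
    using block[rule_format, of 0 0] block[rule_format, of 0 1] block[rule_format, of 1 0]
      block[rule_format, of 1 1] by (simp_all add: idm_def numeral_eq_Suc)
  note real_entries = real[of 0 0] real[of 0 1] real[of 0 2] real[of 0 3] real[of 1 0] real[of 1 1]
    real[of 1 2] real[of 1 3] real[of 2 0] real[of 2 1] real[of 2 2] real[of 2 3]
    real[of 3 0] real[of 3 1] real[of 3 2] real[of 3 3]
  note entries = mmult_def madj_def sum_lessThan_4 idm_def sym[simplified] blk real_entries[simplified]
  note DD = lossless[rule_format, THEN conjunct1]
    and PD = lossless[rule_format, THEN conjunct2, THEN conjunct1]
    and PP = lossless[rule_format, THEN conjunct2, THEN conjunct2]
  show ?thesis
  proof (rule real_symmetric_lossless_scalar_constraints)
    show "D 0 2 * D 0 2 + D 1 2 * D 1 2 = 1" using DD[of 2 2] by (simp add: entries)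
    show "D 0 2 * D 0 3 + D 1 2 * D 1 3 = 0" using DD[of 2 3] by (simp add: entries)
    show "D 0 3 * D 0 3 + D 1 3 * D 1 3 = 1" using DD[of 3 3] by (simp add: entries)
    show "D 0 0 * D 0 2 + D 0 1 * D 1 2 = 0" using DD[of 0 2] by (simp add: entries)
    show "D 0 0 * D 0 3 + D 0 1 * D 1 3 = 0" using DD[of 0 3] by (simp add: entries)
    show "D 0 1 * D 0 2 + D 1 1 * D 1 2 = 0" using DD[of 1 2] by (simp add: entries)
    show "D 0 1 * D 0 3 + D 1 1 * D 1 3 = 0" using DD[of 1 3] by (simp add: entries)
    show "P 0 0 * D 0 2 + P 0 1 * D 1 2 = D 0 0 * P 0 2 + D 0 1 * P 1 2 + D 0 2"
      using PD[of 0 2] by (simp add: entries algebra_simps)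
    show "P 0 0 * D 0 3 + P 0 1 * D 1 3 = D 0 0 * P 0 3 + D 0 1 * P 1 3 + D 0 3"
      using PD[of 0 3] by (simp add: entries algebra_simps)
    show "P 0 1 * D 0 2 + P 1 1 * D 1 2 = D 0 1 * P 0 2 + D 1 1 * P 1 2 + D 1 2"
      using PD[of 1 2] by (simp add: entries algebra_simps)
    show "P 0 1 * D 0 3 + P 1 1 * D 1 3 = D 0 1 * P 0 3 + D 1 1 * P 1 3 + D 1 3"
      using PD[of 1 3] by (simp add: entries algebra_simps)
    show "z * ((P 0 0 * D 0 2 + P 0 1 * D 1 2) + (D 0 0 * P 0 2 + D 0 1 * P 1 2 + D 0 2))
        + (P 0 0 * P 0 2 + P 0 1 * P 1 2 + P 0 2) = 0"
      using PP[of 0 2] by (simp add: entries algebra_simps)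
    show "z * ((P 0 1 * D 0 2 + P 1 1 * D 1 2) + (D 0 1 * P 0 2 + D 1 1 * P 1 2 + D 1 2))
        + (P 0 1 * P 0 2 + P 1 1 * P 1 2 + P 1 2) = 0"
      using PP[of 1 2] by (simp add: entries algebra_simps)
    show "z * (2 * (P 0 2 * D 0 2 + P 1 2 * D 1 2)) + (P 0 2 * P 0 2 + P 1 2 * P 1 2 + 1) = 0"
      using PP[of 2 2] by (simp add: entries algebra_simps)
  qed
qed

lemma hermitian_square_form:
  fixes K :: cmat and v :: "nat \<Rightarrow> complex"
  assumes herm: "\<forall>i<n. \<forall>j<n. K i j = cnj (K j i)"
  shows "(\<Sum>i<n. \<Sum>j<n. cnj (v i) * mmult n K K i j * v j)
       = of_real (\<Sum>l<n. (cmod (\<Sum>j<n. K l j * v j))\<^sup>2)"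
proof -
  have row: "(\<Sum>i<n. cnj (v i) * K i l) = cnj (\<Sum>j<n. K l j * v j)" if "l < n" for l
  proof -
    have "(\<Sum>i<n. cnj (v i) * K i l) = (\<Sum>i<n. cnj (K l i * v i))"
    proof (rule sum.cong[OF refl])
      fix i assume "i \<in> {..<n}"
      then have "K i l = cnj (K l i)" using herm that by blast
      then show "cnj (v i) * K i l = cnj (K l i * v i)" by (simp add: mult.commute)
    qed
    then show ?thesis by simp
  qed
  have "(\<Sum>i<n. \<Sum>j<n. cnj (v i) * mmult n K K i j * v j)
      = (\<Sum>i<n. \<Sum>j<n. \<Sum>l<n. cnj (v i) * K i l * (K l j * v j))"
    unfolding mmult_def sum_distrib_left sum_distrib_right by (simp only: mult.assoc)
  also have "\<dots> = (\<Sum>l<n. (\<Sum>i<n. cnj (v i) * K i l) * (\<Sum>j<n. K l j * v j))"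
  proof -
    have "(\<Sum>i<n. \<Sum>j<n. \<Sum>l<n. cnj (v i) * K i l * (K l j * v j))
        = (\<Sum>i<n. \<Sum>l<n. \<Sum>j<n. cnj (v i) * K i l * (K l j * v j))"
      by (rule sum.cong[OF refl], rule sum.swap)
    also have "\<dots> = (\<Sum>l<n. \<Sum>i<n. \<Sum>j<n. cnj (v i) * K i l * (K l j * v j))"
      by (rule sum.swap)
    finally show ?thesis by (simp only: sum_product)
  qed
  also have "\<dots> = (\<Sum>l<n. cnj (\<Sum>j<n. K l j * v j) * (\<Sum>j<n. K l j * v j))"
    using row by simp
  also have "\<dots> = of_real (\<Sum>l<n. (cmod (\<Sum>j<n. K l j * v j))\<^sup>2)"
    unfolding of_real_sum by (simp only: complex_norm_square mult.commute)
  finally show ?thesis .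
qed

text \<open>The explicit extension, for w = sqrt(\<zeta>^2 - 1): SS(s) = E + M/(s + \<zeta>) where E = ext_const
  swaps the two coordinate blocks and M = ext_residue z w has rank 2.  Its defect I - SS SS*
  turns out to be a nonnegative multiple of K = ext_defect z w.\<close>

definition mat4 :: "complex list list \<Rightarrow> cmat" where
  "mat4 xs i j = (if i < 4 \<and> j < 4 then xs ! i ! j else 0)"

definition ext_const :: cmat where
  "ext_const = mat4 [[0, 0, 1, 0], [0, 0, 0, 1], [1, 0, 0, 0], [0, 1, 0, 0]]"

definition ext_residue :: "complex \<Rightarrow> complex \<Rightarrow> cmat" where
  "ext_residue z w = mat4 [[1, 0, - z, \<i> * w], [0, 1, - \<i> * w, - z],
                          [- z, - \<i> * w, 1, 0], [\<i> * w, - z, 0, 1]]"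

definition ext_defect :: "complex \<Rightarrow> complex \<Rightarrow> cmat" where
  "ext_defect z w = mat4 [[z, - \<i> * w, -1, 0], [\<i> * w, z, 0, -1],
                         [-1, 0, z, \<i> * w], [0, -1, - \<i> * w, z]]"

lemma ext_const_unitary: "\<forall>i<4. \<forall>j<4. mmult 4 ext_const (madj ext_const) i j = idm i j"
  by (simp add: all_less_4 sum_lessThan_4 mmult_def madj_def ext_const_def mat4_def idm_def)

lemma ext_residue_const:
  assumes "cnj z = z" "cnj w = w"
  shows "\<forall>i<4. \<forall>j<4. mmult 4 (ext_residue z w) (madj ext_const) i j = - ext_defect z w i j"
    and "\<forall>i<4. \<forall>j<4. mmult 4 ext_const (madj (ext_residue z w)) i j = - ext_defect z w i j"
  using assms by (simp_all add: all_less_4 sum_lessThan_4 mmult_def madj_def ext_const_def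
      ext_residue_def ext_defect_def mat4_def)

lemma ext_residue_square:
  assumes "cnj z = z" "cnj w = w" "w * w = z * z - 1"
  shows "\<forall>i<4. \<forall>j<4. mmult 4 (ext_residue z w) (madj (ext_residue z w)) i j
      = 2 * z * ext_defect z w i j"
  using assms by (simp add: all_less_4 sum_lessThan_4 mmult_def madj_def ext_residue_def
      ext_defect_def mat4_def algebra_simps)

lemma ext_residue_rank_2:
  assumes "w * w = z * z - 1"
  shows "\<forall>i<4. \<forall>j<4. (\<Sum>k<2. ext_residue z w i k * ext_residue z w k j) = ext_residue z w i j"
  using assms by (simp add: all_less_4 sum_lessThan_2 ext_residue_def mat4_def algebra_simps)

lemma ext_defect_square:
  assumes "w * w = z * z - 1"
  shows "\<forall>i<4. \<forall>j<4. mmult 4 (ext_defect z w) (ext_defect z w) i j = 2 * z * ext_defect z w i j"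
  using assms by (simp add: all_less_4 sum_lessThan_4 mmult_def ext_defect_def mat4_def algebra_simps)

lemma ext_defect_hermitian:
  assumes "cnj z = z" "cnj w = w"
  shows "\<forall>i<4. \<forall>j<4. ext_defect z w i j = cnj (ext_defect z w j i)"
  using assms by (simp add: all_less_4 ext_defect_def mat4_def)

lemma affine_defect:
  fixes D M K :: cmat and f c :: complex
  assumes "\<forall>i<n. \<forall>j<n. mmult n D (madj D) i j = idm i j"
    and "\<forall>i<n. \<forall>j<n. mmult n M (madj D) i j = - K i j"
    and "\<forall>i<n. \<forall>j<n. mmult n D (madj M) i j = - K i j"
    and "\<forall>i<n. \<forall>j<n. mmult n M (madj M) i j = c * K i j"
    and "i < n" "j < n"
  shows "idm i j - mmult n (\<lambda>i j. D i j + f * M i j) (madj (\<lambda>i j. D i j + f * M i j)) i j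
       = (f + cnj f - f * cnj f * c) * K i j"
  using assms by (simp add: mmult_adj_affine algebra_simps)

definition inner_ext :: "real \<Rightarrow> complex \<Rightarrow> cmat" where
  "inner_ext \<zeta> = (\<lambda>s i j. ext_const i j
      + ext_residue (of_real \<zeta>) (of_real (sqrt (\<zeta>\<^sup>2 - 1))) i j / (s + of_real \<zeta>))"

lemma sqrt_parameter:
  fixes \<zeta> :: real
  assumes "\<zeta> \<ge> 1"
  shows "complex_of_real (sqrt (\<zeta>\<^sup>2 - 1)) * of_real (sqrt (\<zeta>\<^sup>2 - 1)) = of_real \<zeta> * of_real \<zeta> - 1"
proof -
  have "\<zeta>\<^sup>2 - 1 \<ge> 0" using assms by (simp add: one_le_power)
  then have "sqrt (\<zeta>\<^sup>2 - 1) * sqrt (\<zeta>\<^sup>2 - 1) = \<zeta> * \<zeta> - 1" by (simp add: power2_eq_square)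
  then show ?thesis by (metis of_real_1 of_real_diff of_real_mult)
qed

lemma inner_ext_defect:
  fixes \<zeta> :: real
  assumes z1: "\<zeta> \<ge> 1" and s: "s + of_real \<zeta> \<noteq> 0" and ij: "i < 4" "j < 4"
  shows "idm i j - mmult 4 (inner_ext \<zeta> s) (madj (inner_ext \<zeta> s)) i j
     = of_real (2 * Re s / (cmod (s + of_real \<zeta>))\<^sup>2)
       * ext_defect (of_real \<zeta>) (of_real (sqrt (\<zeta>\<^sup>2 - 1))) i j"
proof -
  let ?z = "complex_of_real \<zeta>" and ?w = "complex_of_real (sqrt (\<zeta>\<^sup>2 - 1))"
  define u where "u = s + ?z"
  have real: "cnj ?z = ?z" "cnj ?w = ?w" by simp_all
  have SS: "inner_ext \<zeta> s = (\<lambda>i j. ext_const i j + (1 / u) * ext_residue ?z ?w i j)"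
    by (simp add: inner_ext_def u_def fun_eq_iff)
  have "idm i j - mmult 4 (inner_ext \<zeta> s) (madj (inner_ext \<zeta> s)) i j
      = (1 / u + cnj (1 / u) - 1 / u * cnj (1 / u) * (2 * ?z)) * ext_defect ?z ?w i j"
    unfolding SS
    by (rule affine_defect[OF ext_const_unitary ext_residue_const[OF real] _ ij])
      (use ext_residue_square[OF real sqrt_parameter[OF z1]] in \<open>simp add: mult.assoc\<close>)
  also have "1 / u + cnj (1 / u) - 1 / u * cnj (1 / u) * (2 * ?z) = (u + cnj u - 2 * ?z) / (u * cnj u)"
  proof -
    have "u \<noteq> 0" using s by (simp add: u_def)
    then show ?thesis by (simp add: field_simps)
  qed
  also have "u + cnj u = of_real (2 * Re u)" by (rule complex_add_cnj)
  also have "u * cnj u = of_real ((cmod u)\<^sup>2)" by (simp only: complex_norm_square)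
  also have "Re u = Re s + \<zeta>" by (simp add: u_def)
  finally show ?thesis unfolding u_def[symmetric] by (simp add: algebra_simps)
qed

lemma inner_ext_extends: "extends4 (inner_ext \<zeta>) (diag_pole (of_real \<zeta>))"
  unfolding extends4_def inner_ext_def diag_pole_def
  by (rule always_eventually) (simp add: all_less_2 ext_const_def ext_residue_def mat4_def)

lemma inner_ext_symmetric: "symmetric_fun 4 (inner_ext \<zeta>)"
  unfolding symmetric_fun_def inner_ext_def
  by (rule always_eventually) (simp add: all_less_4 ext_const_def ext_residue_def mat4_def)

lemma inner_ext_real_coeffs_at_1: "real_coeffs 4 (inner_ext 1)"
  unfolding real_coeffs_def inner_ext_def
  by (rule always_eventually) (simp add: all_less_4 ext_const_def ext_residue_def mat4_def)

text \<open>It has McMillan degree 2: A = -\<zeta> I with B, C the factors of M realize it, and no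
  extension of S has smaller degree.\<close>

lemma inner_ext_degree_2:
  assumes "\<zeta> \<ge> 1"
  shows "mcmillan_degree_is 4 (inner_ext \<zeta>) 2"
proof -
  have "realizes 4 2 (\<lambda>i j. if i = j then - of_real \<zeta> else 0)
      (ext_residue (of_real \<zeta>) (of_real (sqrt (\<zeta>\<^sup>2 - 1))))
      (ext_residue (of_real \<zeta>) (of_real (sqrt (\<zeta>\<^sup>2 - 1)))) ext_const (inner_ext \<zeta>)"
    unfolding inner_ext_def
    by (rule realizes_simple_pole) (rule ext_residue_rank_2[OF sqrt_parameter[OF assms]])
  then have "realizable 4 2 (inner_ext \<zeta>)" unfolding realizable_def by blast
  then show ?thesis
    unfolding mcmillan_degree_is_def
    using extension_of_diag_pole_not_realizable_below_2[OF inner_ext_extends] by blast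
qed

text \<open>SS is inner: the defect is positive semidefinite on the right half plane (K^2 = 2 \<zeta> K) and
  vanishes on the imaginary axis.\<close>

lemma inner_ext_inner:
  assumes z1: "\<zeta> \<ge> 1"
  shows "inner_fun 4 (inner_ext \<zeta>)"
proof -
  let ?z = "complex_of_real \<zeta>" and ?w = "complex_of_real (sqrt (\<zeta>\<^sup>2 - 1))"
  let ?K = "ext_defect ?z ?w"
  have "rational_mfun 4 (inner_ext \<zeta>)"
    using inner_ext_degree_2[OF z1] unfolding mcmillan_degree_is_def rational_mfun_def by blast
  moreover have "(\<lambda>s. inner_ext \<zeta> s i j) holomorphic_on RHP" for i j
    using add_of_real_ne_0_RHP z1 by (auto simp: inner_ext_def intro!: holomorphic_intros)
  moreover have "le_identity 4 (mmult 4 (inner_ext \<zeta> s) (madj (inner_ext \<zeta> s)))"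
    if s: "s \<in> RHP" for s
    unfolding le_identity_def Let_def
  proof (intro allI)
    fix v :: "nat \<Rightarrow> complex"
    let ?g = "2 * Re s / (cmod (s + ?z))\<^sup>2"
    let ?q = "(\<Sum>l<4. (cmod (\<Sum>j<4. ?K l j * v j))\<^sup>2) / (2 * \<zeta>)"
    have u: "s + ?z \<noteq> 0" using add_of_real_ne_0_RHP[OF s] z1 by simp
    have "(\<Sum>i<4. \<Sum>j<4. cnj (v i) * (idm i j - mmult 4 (inner_ext \<zeta> s) (madj (inner_ext \<zeta> s)) i j) * v j)
        = of_real ?g * (\<Sum>i<4. \<Sum>j<4. cnj (v i) * ?K i j * v j)"
      using inner_ext_defect[OF z1 u]
      by (simp add: sum_distrib_left algebra_simps)
    also have "(\<Sum>i<4. \<Sum>j<4. cnj (v i) * ?K i j * v j)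
        = (\<Sum>i<4. \<Sum>j<4. cnj (v i) * mmult 4 ?K ?K i j * v j) / of_real (2 * \<zeta>)"
    proof -
      have "?K i j = mmult 4 ?K ?K i j / of_real (2 * \<zeta>)" if "i < 4" "j < 4" for i j
        using ext_defect_square[OF sqrt_parameter[OF z1]] that z1 by simp
      then show ?thesis by (simp add: sum_divide_distrib)
    qed
    also have "\<dots> = of_real ?q"
      by (simp add: hermitian_square_form[OF ext_defect_hermitian])
    finally have q: "(\<Sum>i<4. \<Sum>j<4. cnj (v i) * (idm i j - mmult 4 (inner_ext \<zeta> s)
        (madj (inner_ext \<zeta> s)) i j) * v j) = of_real (?g * ?q)" by simp
    have "0 \<le> ?g * ?q" using s z1 by (simp add: RHP_def sum_nonneg)
    then show "(\<Sum>i<4. \<Sum>j<4. cnj (v i) * (idm i j - mmult 4 (inner_ext \<zeta> s)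
        (madj (inner_ext \<zeta> s)) i j) * v j) \<in> \<real> \<and>
      0 \<le> Re (\<Sum>i<4. \<Sum>j<4. cnj (v i) * (idm i j - mmult 4 (inner_ext \<zeta> s)
        (madj (inner_ext \<zeta> s)) i j) * v j)"
      unfolding q by simp
  qed
  moreover have "mmult 4 (inner_ext \<zeta> (\<i> * of_real \<omega>)) (madj (inner_ext \<zeta> (\<i> * of_real \<omega>))) i j
      = idm i j" if "i < 4" "j < 4" for \<omega> :: real and i j
    using inner_ext_defect[OF z1 _ that, of "\<i> * of_real \<omega>"] z1 by (simp add: complex_eq_iff)
  ultimately show ?thesis unfolding inner_fun_def schur_fun_def by blast
qed

lemma real_symmetric_inner_extension_forces_unit:
  fixes SS :: "complex \<Rightarrow> cmat" and \<zeta> :: real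
  assumes ext: "extends4 SS (diag_pole (of_real \<zeta>))" and sym: "symmetric_fun 4 SS"
    and inn: "inner_fun 4 SS" and deg: "mcmillan_degree_is 4 SS 2" and rc: "real_coeffs 4 SS"
  shows "\<zeta> = 1"
proof -
  have "\<forall>\<^sub>F s in cofinite. SS s 2 2 = 1 / (s + of_real \<zeta>)"
    using extends4_diag_pole[OF ext]
    by (rule eventually_mono) (auto simp: all_less_2 idm_def eval_nat_numeral)
  then have z1: "\<zeta> \<ge> 1"
    using inn schur_diag_inverse_ge_1[where p = 4 and F = SS and k = 2]
    unfolding inner_fun_def by simp
  from deg obtain A B C D where "realizes 4 2 A B C D SS"
    unfolding mcmillan_degree_is_def realizable_def by blast
  from degree2_extension_pole_form[OF ext this] obtain P where
    pole: "\<forall>\<^sub>F s in cofinite. \<forall>i<4. \<forall>j<4. SS s i j = D i j + P i j / (s + of_real \<zeta>)"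
    and block: "\<forall>i<2. \<forall>j<2. D (i + 2) (j + 2) = 0 \<and> P (i + 2) (j + 2) = idm i j"
    by blast
  have "of_real \<zeta> * of_real \<zeta> = (1 :: complex)"
  proof (rule real_symmetric_lossless_pole_at_unit[OF _ block])
    show "\<forall>i<4. \<forall>j<4. D i j = D j i \<and> P i j = P j i \<and> cnj (D i j) = D i j \<and> cnj (P i j) = P i j"
      using pole_form_symmetric[OF pole sym] pole_form_real[OF pole rc] by blast
    show "\<forall>i<4. \<forall>j<4. mmult 4 D (madj D) i j = idm i j
        \<and> mmult 4 P (madj D) i j = mmult 4 D (madj P) i j
        \<and> of_real \<zeta> * (mmult 4 P (madj D) i j + mmult 4 D (madj P) i j) + mmult 4 P (madj P) i j = 0"
      using pole_form_unitary_on_axis[OF pole] inn unfolding inner_fun_def by blast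
  qed
  then have "\<zeta> * \<zeta> = 1" by (metis of_real_1 of_real_eq_iff of_real_mult)
  then have "(\<zeta> - 1) * (\<zeta> + 1) = 0" by (simp add: algebra_simps)
  then show ?thesis using z1 by simp
qed

theorem mainTheorem15:
  fixes \<zeta> :: real and S :: "complex \<Rightarrow> cmat"
  defines "S \<equiv> (\<lambda>s i j. if i = j then 1 / (s + complex_of_real \<zeta>) else 0)"
  shows "(schur_fun 2 S \<longleftrightarrow> \<zeta> \<ge> 1)
     \<and> (\<zeta> \<ge> 1 \<longrightarrow> (\<exists>SS. extends4 SS S \<and> symmetric_fun 4 SS \<and> inner_fun 4 SS
                            \<and> mcmillan_degree_is 4 SS 2))
     \<and> ((\<exists>SS. extends4 SS S \<and> symmetric_fun 4 SS \<and> inner_fun 4 SS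
             \<and> mcmillan_degree_is 4 SS 2 \<and> real_coeffs 4 SS) \<longleftrightarrow> \<zeta> = 1)"
proof -
  have S: "S = diag_pole (of_real \<zeta>)" unfolding S_def diag_pole_def ..
  have construction: "extends4 (inner_ext \<zeta>) S \<and> symmetric_fun 4 (inner_ext \<zeta>)
      \<and> inner_fun 4 (inner_ext \<zeta>) \<and> mcmillan_degree_is 4 (inner_ext \<zeta>) 2" if "\<zeta> \<ge> 1"
    unfolding S using inner_ext_extends inner_ext_symmetric inner_ext_inner[OF that]
      inner_ext_degree_2[OF that] by blast
  have necessity: "(\<exists>SS. extends4 SS S \<and> symmetric_fun 4 SS \<and> inner_fun 4 SS
      \<and> mcmillan_degree_is 4 SS 2 \<and> real_coeffs 4 SS) \<Longrightarrow> \<zeta> = 1"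
    unfolding S using real_symmetric_inner_extension_forces_unit by blast
  have "schur_fun 2 S \<longleftrightarrow> \<zeta> \<ge> 1" unfolding S by (rule diag_pole_schur_iff)
  then show ?thesis
    using construction necessity inner_ext_real_coeffs_at_1 by auto
qed

end
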